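(* Let $G$ be a locally compact, Hausdorff, étale groupoid and $\alpha$ an automorphism of $G$. Suppose that $G$ is ample and that $\mathcal{B}$ is a basis for the topology on $G^{(0)}$ consisting of compact open bisections such that for every $V \in \mathcal{B}$ there exists an integer $l \ge 1$ with $\alpha^{-l}(V)\subseteq V$. Then $G^\infty_\alpha$ is locally contracting.
   Context: Let $E$ be the directed graph with one vertex $v$ and countably infinitely many edges $e_1,e_2,\dots$. Let $E^*$ be its finite paths (including $v$), $E^\infty$ its infinite paths, $P = E^*\sqcup E^\infty$, $|\mu|$ the length. $H_\infty$ is the groupoid $\{(\alpha x, |\alpha|-|\beta|, \beta x) : x\in P, \alpha,\beta\in E^*\}\subseteq P\times\mathbb{Z}\times P$ with $(x,m,y)(y,n,z)=(x,m+n,z)$, $(x,m,y)^{-1}=(y,-m,x)$, unit space identified with $P$, topology generated by the sets $Z((\alpha,\beta)\setminus F)=\{(\alpha x,|\alpha|-|\beta|,\beta x): x\in P, x\text{ does not begin with an edge in }F\}$ ($F$ finite); $c(x,m,y)=m$. An automorphism is a structure-preserving homeomorphism. $G^\infty_\alpha$ is $H_\infty\times G$ with product topology, unit space $H_\infty^{(0)}\times G^{(0)}$, $r(h,g)=(r(h),r(g))$, $s(h,g)=(s(h),\alpha^{c(h)}(s(g)))$, product $(h_1,g_1)(h_2,g_2)=(h_1h_2,g_1\alpha^{-c(h_1)}(g_2))$, inverse $(h,g)^{-1}=(h^{-1},\alpha^{c(h)}(g^{-1}))$. A groupoid is ample if it has a basis of compact open bisections. An ample groupoid $L$ is locally contracting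 if for every nonempty open $W\subseteq L^{(0)}$ there is a compact open bisection $B$ with $r(B)\subsetneq s(B)\subseteq W$. *)

theory Defs
  imports "HOL-Analysis.Analysis"
begin

record 'a grpd =
  garr :: "'a set"
  grng :: "'a \<Rightarrow> 'a"
  gsrc :: "'a \<Rightarrow> 'a"
  gcomp :: "'a \<Rightarrow> 'a \<Rightarrow> 'a"
  ginv :: "'a \<Rightarrow> 'a"
  gtop :: "'a topology"

definition units :: "('a, 'b) grpd_scheme \<Rightarrow> 'a set" where
  "units G = {a \<in> garr G. grng G a = a}"

definition composable :: "('a, 'b) grpd_scheme \<Rightarrow> ('a \<times> 'a) set" where
  "composable G = {(a, b). a \<in> garr G \<and> b \<in> garr G \<and> gsrc G a = grng G b}"

definition groupoid :: "('a, 'b) grpd_scheme \<Rightarrow> bool" where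
  "groupoid G \<longleftrightarrow>
    (\<forall>a\<in>garr G. grng G a \<in> garr G \<and> gsrc G a \<in> garr G \<and> ginv G a \<in> garr G) \<and>
    (\<forall>a\<in>garr G. grng G (grng G a) = grng G a \<and> gsrc G (grng G a) = grng G a \<and>
                 grng G (gsrc G a) = gsrc G a \<and> gsrc G (gsrc G a) = gsrc G a) \<and>
    (\<forall>a\<in>garr G. grng G (ginv G a) = gsrc G a \<and> gsrc G (ginv G a) = grng G a) \<and>
    (\<forall>(a, b)\<in>composable G. gcomp G a b \<in> garr G \<and>
        grng G (gcomp G a b) = grng G a \<and> gsrc G (gcomp G a b) = gsrc G b) \<and>
    (\<forall>a\<in>garr G. \<forall>b\<in>garr G. \<forall>c\<in>garr G. gsrc G a = grng G b \<longrightarrow> gsrc G b = grng G c \<longrightarrow>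
        gcomp G (gcomp G a b) c = gcomp G a (gcomp G b c)) \<and>
    (\<forall>a\<in>garr G. gcomp G (grng G a) a = a \<and> gcomp G a (gsrc G a) = a) \<and>
    (\<forall>a\<in>garr G. gcomp G a (ginv G a) = grng G a \<and> gcomp G (ginv G a) a = gsrc G a)"

definition topological_groupoid :: "('a, 'b) grpd_scheme \<Rightarrow> bool" where
  "topological_groupoid G \<longleftrightarrow> groupoid G \<and> topspace (gtop G) = garr G \<and>
    continuous_map (gtop G) (gtop G) (grng G) \<and>
    continuous_map (gtop G) (gtop G) (gsrc G) \<and>
    continuous_map (gtop G) (gtop G) (ginv G) \<and>
    continuous_map (subtopology (prod_topology (gtop G) (gtop G)) (composable G)) (gtop G)
       (\<lambda>(a, b). gcomp G a b)"

definition etale :: "('a, 'b) grpd_scheme \<Rightarrow> bool" where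
  "etale G \<longleftrightarrow> (\<forall>a\<in>garr G. \<exists>U. openin (gtop G) U \<and> a \<in> U \<and>
      openin (subtopology (gtop G) (units G)) (grng G ` U) \<and>
      homeomorphic_map (subtopology (gtop G) U) (subtopology (gtop G) (grng G ` U)) (grng G))"

definition bisection :: "('a, 'b) grpd_scheme \<Rightarrow> 'a set \<Rightarrow> bool" where
  "bisection G B \<longleftrightarrow> B \<subseteq> garr G \<and> inj_on (grng G) B \<and> inj_on (gsrc G) B"

definition compact_open_bisection :: "('a, 'b) grpd_scheme \<Rightarrow> 'a set \<Rightarrow> bool" where
  "compact_open_bisection G B \<longleftrightarrow> bisection G B \<and> openin (gtop G) B \<and> compactin (gtop G) B"

definition ample :: "('a, 'b) grpd_scheme \<Rightarrow> bool" where
  "ample G \<longleftrightarrow> (\<exists>\<B>. (\<forall>B\<in>\<B>. compact_open_bisection G B) \<and>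
      (\<forall>U a. openin (gtop G) U \<and> a \<in> U \<longrightarrow> (\<exists>B\<in>\<B>. a \<in> B \<and> B \<subseteq> U)))"

definition automorphism :: "('a, 'b) grpd_scheme \<Rightarrow> ('a \<Rightarrow> 'a) \<Rightarrow> bool" where
  "automorphism G \<alpha> \<longleftrightarrow> bij_betw \<alpha> (garr G) (garr G) \<and>
     homeomorphic_map (gtop G) (gtop G) \<alpha> \<and>
     (\<forall>a\<in>garr G. \<alpha> (grng G a) = grng G (\<alpha> a) \<and> \<alpha> (gsrc G a) = gsrc G (\<alpha> a) \<and>
                  \<alpha> (ginv G a) = ginv G (\<alpha> a)) \<and>
     (\<forall>(a, b)\<in>composable G. \<alpha> (gcomp G a b) = gcomp G (\<alpha> a) (\<alpha> b))"

definition locally_contracting :: "('a, 'b) grpd_scheme \<Rightarrow> bool" where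
  "locally_contracting L \<longleftrightarrow>
    (\<forall>W. openin (subtopology (gtop L) (units L)) W \<and> W \<noteq> {} \<longrightarrow>
       (\<exists>B. compact_open_bisection L B \<and> grng L ` B \<subset> gsrc L ` B \<and> gsrc L ` B \<subseteq> W))"

section \<open>The graph with one vertex and countably many edges (edges indexed by nat)\<close>

text \<open>Finite paths: lists of edges (the empty list is the vertex v);
  infinite paths: sequences of edges.\<close>
type_synonym epath = "nat list + (nat \<Rightarrow> nat)"

fun pcat :: "nat list \<Rightarrow> epath \<Rightarrow> epath" where
  "pcat a (Inl l) = Inl (a @ l)"
| "pcat a (Inr f) = Inr (\<lambda>n. if n < length a then a ! n else f (n - length a))"

definition avoids :: "nat set \<Rightarrow> epath \<Rightarrow> bool" where
  "avoids F x = (case x of Inl [] \<Rightarrow> True | Inl (e # _) \<Rightarrow> e \<notin> F | Inr f \<Rightarrow> f 0 \<notin> F)"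

type_synonym harr = "epath \<times> int \<times> epath"

definition Zset :: "nat list \<Rightarrow> nat list \<Rightarrow> nat set \<Rightarrow> harr set" where
  "Zset a b F = {(pcat a x, int (length a) - int (length b), pcat b x) | x. avoids F x}"

definition Hinf :: "harr grpd" where
  "Hinf = \<lparr> garr = {(pcat a x, int (length a) - int (length b), pcat b x) | a b x. True},
            grng = (\<lambda>(x, m, y). (x, 0, x)),
            gsrc = (\<lambda>(x, m, y). (y, 0, y)),
            gcomp = (\<lambda>(x, m, y) (y', n, z). (x, m + n, z)),
            ginv = (\<lambda>(x, m, y). (y, - m, x)),
            gtop = topology_generated_by {Zset a b F | a b F. finite F} \<rparr>"

definition hc :: "harr \<Rightarrow> int" where
  "hc h = fst (snd h)"

definition autpow :: "('a, 'b) grpd_scheme \<Rightarrow> ('a \<Rightarrow> 'a) \<Rightarrow> int \<Rightarrow> 'a \<Rightarrow> 'a" where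
  "autpow G \<alpha> n = (if 0 \<le> n then \<alpha> ^^ nat n else (inv_into (garr G) \<alpha>) ^^ nat (- n))"

definition Ginf :: "('a, 'b) grpd_scheme \<Rightarrow> ('a \<Rightarrow> 'a) \<Rightarrow> (harr \<times> 'a) grpd" where
  "Ginf G \<alpha> = \<lparr> garr = garr Hinf \<times> garr G,
       grng = (\<lambda>(h, g). (grng Hinf h, grng G g)),
       gsrc = (\<lambda>(h, g). (gsrc Hinf h, autpow G \<alpha> (hc h) (gsrc G g))),
       gcomp = (\<lambda>(h1, g1) (h2, g2). (gcomp Hinf h1 h2, gcomp G g1 (autpow G \<alpha> (- hc h1) g2))),
       ginv = (\<lambda>(h, g). (ginv Hinf h, autpow G \<alpha> (hc h) (ginv G g))),
       gtop = prod_topology (gtop Hinf) (gtop G) \<rparr>"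

end

theory Submission
  imports Defs
begin

(*
  A nonempty open set of units of G^infinity_alpha contains a product Z(a \ F) x V with V in the
  basis, units of H_infinity being identified with paths.  Choose l >= 1 with alpha^-l(V) <= V,
  an edge e not in F, and u = e^l.  The compact open bisection Z((a u, a) \ F) x alpha^-l(V) has
  degree l, so its source is Z(a \ F) x alpha^l(alpha^-l(V)) = Z(a \ F) x V, while its range
  Z(a u \ F) x alpha^-l(V) is strictly smaller: it misses the finite path a.  The sets
  Z((a, b) \ F) are compact because paths can be coded as points of the compact space
  (nat + {infinity})^nat.
*)

lemma Times_psubset_Times:
  assumes "A \<subset> A'" "B \<noteq> {}" "B \<subseteq> B'"
  shows "A \<times> B \<subset> A' \<times> B'"
proof
  show "A \<times> B \<subseteq> A' \<times> B'"
    using assms by blast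
  obtain x b where "x \<in> A' - A" "b \<in> B"
    using assms(1,2) by blast
  then have "(x, b) \<in> A' \<times> B' - A \<times> B"
    using assms(3) by blast
  then show "A \<times> B \<noteq> A' \<times> B'"
    by blast
qed

lemma homeomorphic_map_funpow:
  "homeomorphic_map X X f \<Longrightarrow> homeomorphic_map X X (f ^^ n)"
  by (induction n) (auto intro: homeomorphic_map_compose homeomorphic_map_id[THEN iffD2])

lemma units_gsrc: "groupoid G \<Longrightarrow> g \<in> units G \<Longrightarrow> gsrc G g = g"
  unfolding groupoid_def units_def by (metis (mono_tags, lifting) mem_Collect_eq)

lemma automorphism_funpow_preimage:
  fixes l :: nat
  assumes "topological_groupoid G" "automorphism G \<alpha>" "openin (gtop G) V" "compactin (gtop G) V"
  defines "V' \<equiv> {x \<in> garr G. (\<alpha> ^^ l) x \<in> V}"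
  shows "(\<alpha> ^^ l) ` V' = V" "openin (gtop G) V'" "compactin (gtop G) V'" "inj_on (\<alpha> ^^ l) V'"
proof -
  have top: "topspace (gtop G) = garr G"
    using assms(1) by (simp add: topological_groupoid_def)
  have hom: "homeomorphic_map (gtop G) (gtop G) (\<alpha> ^^ l)"
    using assms(2) by (simp add: automorphism_def homeomorphic_map_funpow)
  have surj: "(\<alpha> ^^ l) ` garr G = garr G"
    using homeomorphic_imp_surjective_map[OF hom] top by simp
  show image: "(\<alpha> ^^ l) ` V' = V"
  proof
    show "(\<alpha> ^^ l) ` V' \<subseteq> V"
      unfolding V'_def by blast
    show "V \<subseteq> (\<alpha> ^^ l) ` V'"
    proof
      fix v assume "v \<in> V"
      moreover have "v \<in> garr G"
        using openin_subset[OF assms(3)] top \<open>v \<in> V\<close> by blast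
      then obtain y where "y \<in> garr G" "v = (\<alpha> ^^ l) y"
        using surj by blast
      ultimately show "v \<in> (\<alpha> ^^ l) ` V'"
        unfolding V'_def by blast
    qed
  qed
  show "openin (gtop G) V'"
    using openin_continuous_map_preimage[OF homeomorphic_imp_continuous_map[OF hom] assms(3)]
    by (simp add: V'_def top)
  show "compactin (gtop G) V'"
    using homeomorphic_map_compactness[OF hom, of V'] image assms(4) by (simp add: V'_def top)
  show "inj_on (\<alpha> ^^ l) V'"
    by (rule inj_on_subset[OF homeomorphic_imp_injective_map[OF hom]]) (auto simp: V'_def top)
qed

section \<open>Paths and cylinder sets\<close>

lemma pcat_Nil [simp]: "pcat [] x = x"
  by (cases x) auto

lemma pcat_append: "pcat (a @ b) x = pcat a (pcat b x)"
  by (cases x) (auto simp: nth_append fun_eq_iff)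

lemma pcat_eq_same_length:
  assumes "pcat a x = pcat a' x'" "length a = length a'"
  shows "a = a' \<and> x = x'"
proof (cases x)
  case (Inl l)
  then obtain l' where "x' = Inl l'" using assms by (cases x') auto
  then show ?thesis using assms Inl by auto
next
  case (Inr f)
  then obtain f' where f': "x' = Inr f'" using assms by (cases x') auto
  have eq: "(if n < length a then a ! n else f (n - length a)) =
            (if n < length a then a' ! n else f' (n - length a))" for n
    using assms Inr f' by (auto simp: fun_eq_iff)
  have "a = a'"
  proof (rule nth_equalityI)
    show "i < length a \<Longrightarrow> a ! i = a' ! i" for i using eq[of i] by simp
  qed (fact assms(2))
  moreover have "f = f'"
    using eq[of "_ + length a"] by auto
  ultimately show ?thesis using Inr f' by simp
qed

lemma pcat_inject [simp]: "pcat a x = pcat a y \<longleftrightarrow> x = y"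
  using pcat_eq_same_length by blast

lemma pcat_eq_pcat_prefix:
  assumes "pcat a x = pcat c w" "length a \<le> length c"
  shows "\<exists>u. c = a @ u \<and> x = pcat u w"
proof -
  have "pcat a x = pcat (take (length a) c) (pcat (drop (length a) c) w)"
    using assms(1) by (simp flip: pcat_append)
  then have "a = take (length a) c \<and> x = pcat (drop (length a) c) w"
    using pcat_eq_same_length assms(2) by (metis length_take min.absorb2)
  then show ?thesis by (metis append_take_drop_id)
qed

lemma pcat_eq_pcat_cases:
  assumes "pcat a x = pcat c w"
  shows "(\<exists>u. c = a @ u \<and> x = pcat u w) \<or> (\<exists>u. a = c @ u \<and> w = pcat u x)"
  using pcat_eq_pcat_prefix assms by (metis nat_le_linear)

lemma avoids_pcat: "u \<noteq> [] \<Longrightarrow> avoids F (pcat u y) \<longleftrightarrow> hd u \<notin> F"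
  by (cases y; cases u) (auto simp: avoids_def)

lemma avoids_empty [simp]: "avoids {} x"
  by (auto simp: avoids_def split: sum.splits list.splits)

lemma avoids_Un: "avoids (F \<union> F') x \<longleftrightarrow> avoids F x \<and> avoids F' x"
  by (auto simp: avoids_def split: sum.splits list.splits)

(* The paper's Z(a \ F): the paths a x such that x does not begin with an edge in F. *)
definition cylinder :: "nat list \<Rightarrow> nat set \<Rightarrow> epath set" where
  "cylinder a F = pcat a ` {x. avoids F x}"

definition path_top :: "epath topology" where
  "path_top = topology_generated_by {cylinder a F | a F. finite F}"

lemma pcat_in_cylinder_iff [simp]: "pcat a x \<in> cylinder a F \<longleftrightarrow> avoids F x"
  by (auto simp: cylinder_def)

lemma cylinder_Nil: "cylinder [] F = {x. avoids F x}"
  by (simp add: cylinder_def)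

lemma topspace_path_top [simp]: "topspace path_top = UNIV"
proof -
  have "cylinder [] {} = UNIV" by (simp add: cylinder_Nil)
  then show ?thesis
    unfolding path_top_def topology_generated_by_topspace by blast
qed

lemma openin_cylinder: "finite F \<Longrightarrow> openin path_top (cylinder a F)"
  unfolding path_top_def by (rule topology_generated_by_Basis) blast

lemma cylinder_append_subset:
  assumes "u \<noteq> []" "hd u \<notin> F"
  shows "cylinder (a @ u) F' \<subseteq> cylinder a F"
  using assms by (auto simp: cylinder_def pcat_append avoids_pcat)

lemma pcat_neq_Inl_Nil: "u \<noteq> [] \<Longrightarrow> pcat u y \<noteq> Inl []"
  by (cases y) auto

lemma cylinder_append_psubset:
  assumes "u \<noteq> []" "hd u \<notin> F"
  shows "cylinder (a @ u) F \<subset> cylinder a F"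
proof
  show "cylinder (a @ u) F \<subseteq> cylinder a F"
    using assms by (rule cylinder_append_subset)
  have "avoids F (Inl [])"
    by (simp add: avoids_def)
  then have "pcat a (Inl []) \<in> cylinder a F"
    by (simp only: pcat_in_cylinder_iff)
  moreover have "pcat a (Inl []) \<notin> cylinder (a @ u) F"
  proof
    assume "pcat a (Inl []) \<in> cylinder (a @ u) F"
    then obtain y where "pcat a (Inl []) = pcat (a @ u) y"
      unfolding cylinder_def by blast
    then show False
      using pcat_neq_Inl_Nil[OF assms(1)] by (metis pcat_append pcat_inject)
  qed
  ultimately show "cylinder (a @ u) F \<noteq> cylinder a F"
    by blast
qed

lemma cylinder_Int_cylinder_append:
  assumes "x \<in> cylinder a F" "x \<in> cylinder (a @ u) F'" "finite F" "finite F'"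
  shows "\<exists>b F''. finite F'' \<and> x \<in> cylinder b F'' \<and> cylinder b F'' \<subseteq> cylinder a F \<inter> cylinder (a @ u) F'"
proof (cases "u = []")
  case True
  then have "x \<in> cylinder a (F \<union> F')" "cylinder a (F \<union> F') \<subseteq> cylinder a F \<inter> cylinder (a @ u) F'"
    using assms(1,2) by (auto simp: cylinder_def avoids_Un)
  then show ?thesis using assms(3,4) by blast
next
  case False
  obtain y where "x = pcat (a @ u) y" using assms(2) by (auto simp: cylinder_def)
  then have "hd u \<notin> F"
    using assms(1) False by (simp add: pcat_append avoids_pcat)
  with False have "cylinder (a @ u) F' \<subseteq> cylinder a F"
    by (rule cylinder_append_subset)
  then show ?thesis using assms(2,4) by blast
qed

lemma cylinder_Int_cylinder:
  assumes "x \<in> cylinder a F" "x \<in> cylinder a' F'" "finite F" "finite F'"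
  shows "\<exists>b F''. finite F'' \<and> x \<in> cylinder b F'' \<and> cylinder b F'' \<subseteq> cylinder a F \<inter> cylinder a' F'"
proof -
  obtain y y' where "x = pcat a y" "x = pcat a' y'"
    using assms(1,2) unfolding cylinder_def by blast
  then consider u where "a' = a @ u" | u where "a = a' @ u"
    using pcat_eq_pcat_cases by metis
  then show ?thesis
  proof cases
    case 1
    then show ?thesis using cylinder_Int_cylinder_append assms by blast
  next
    case 2
    then show ?thesis using cylinder_Int_cylinder_append[of x a' F' u F] assms by (simp add: Int_commute)
  qed
qed

lemma path_top_cylinder_basis:
  assumes "openin path_top U" "x \<in> U"
  shows "\<exists>a F. finite F \<and> x \<in> cylinder a F \<and> cylinder a F \<subseteq> U"
proof -
  have "generate_topology_on {cylinder a F | a F. finite F} U"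
    using assms(1) unfolding path_top_def by (rule openin_topology_generated_by)
  then show ?thesis using assms(2)
  proof (induction arbitrary: x)
    case Empty
    then show ?case by simp
  next
    case (Int U U')
    obtain a F where "finite F" "x \<in> cylinder a F" "cylinder a F \<subseteq> U"
      using Int.IH(1) Int.prems by blast
    moreover obtain a' F' where "finite F'" "x \<in> cylinder a' F'" "cylinder a' F' \<subseteq> U'"
      using Int.IH(2) Int.prems by blast
    ultimately show ?case
      using cylinder_Int_cylinder[of x a F a' F'] by blast
  next
    case (UN K)
    then obtain k where k: "k \<in> K" "x \<in> k" by blast
    then obtain a F where "finite F" "x \<in> cylinder a F" "cylinder a F \<subseteq> k"
      using UN.IH by blast
    with k(1) show ?case by blast
  next
    case (Basis s)
    then show ?case by blast
  qed
qed

section \<open>Compactness of cylinder sets\<close>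

definition path_code :: "epath \<Rightarrow> nat \<Rightarrow> enat" where
  "path_code x i = (case x of
     Inl l \<Rightarrow> if i < length l then enat (l ! i) else \<infinity>
   | Inr f \<Rightarrow> enat (f i))"

definition decode_path :: "(nat \<Rightarrow> enat) \<Rightarrow> epath" where
  "decode_path s = (if \<exists>i. s i = \<infinity>
     then Inl (map (\<lambda>i. the_enat (s i)) [0..<LEAST i. s i = \<infinity>])
     else Inr (\<lambda>i. the_enat (s i)))"

lemma path_code_pcat:
  "path_code (pcat a y) i = (if i < length a then enat (a ! i) else path_code y (i - length a))"
  by (cases y) (auto simp: path_code_def nth_append)

lemma avoids_iff_path_code: "avoids F y \<longleftrightarrow> path_code y 0 \<notin> enat ` F"
  by (auto simp: avoids_def path_code_def split: sum.splits list.splits)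

lemma pcat_of_path_code_prefix:
  assumes "\<forall>i<length a. path_code x i = enat (a ! i)"
  shows "\<exists>y. x = pcat a y"
proof (cases x)
  case (Inl l)
  have "\<not> length l < length a"
    using assms[rule_format, of "length l"] Inl by (auto simp: path_code_def)
  moreover have "i < length a \<Longrightarrow> l ! i = a ! i" for i
    using assms[rule_format, of i] Inl calculation by (auto simp: path_code_def)
  ultimately have "take (length a) l = a"
    by (intro nth_equalityI) auto
  then have "x = pcat a (Inl (drop (length a) l))"
    using Inl by (metis append_take_drop_id pcat.simps(1))
  then show ?thesis ..
next
  case (Inr f)
  then have "x = pcat a (Inr (\<lambda>i. f (i + length a)))"
    using assms by (auto simp: path_code_def fun_eq_iff)
  then show ?thesis ..
qed

lemma mem_cylinder_iff_path_code:
  "x \<in> cylinder a F \<longleftrightarrow> (\<forall>i<length a. path_code x i = enat (a ! i)) \<and> path_code x (length a) \<notin> enat ` F"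
proof
  assume "x \<in> cylinder a F"
  then show "(\<forall>i<length a. path_code x i = enat (a ! i)) \<and> path_code x (length a) \<notin> enat ` F"
    by (auto simp: cylinder_def path_code_pcat avoids_iff_path_code)
next
  assume code: "(\<forall>i<length a. path_code x i = enat (a ! i)) \<and> path_code x (length a) \<notin> enat ` F"
  then obtain y where "x = pcat a y"
    using pcat_of_path_code_prefix by blast
  then show "x \<in> cylinder a F"
    using code by (simp add: path_code_pcat avoids_iff_path_code)
qed

lemma decode_path_code [simp]: "decode_path (path_code x) = x"
proof (cases x)
  case (Inl l)
  have "(LEAST i. path_code x i = \<infinity>) = length l"
    using Inl by (intro Least_equality) (auto simp: path_code_def not_less[symmetric])
  moreover have "\<exists>i. path_code x i = \<infinity>"
    using Inl by (auto simp: path_code_def intro: exI[of _ "length l"])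
  ultimately show ?thesis
    using Inl by (auto simp: decode_path_def path_code_def intro: nth_equalityI)
qed (auto simp: decode_path_def path_code_def)

lemma path_code_decode:
  assumes "\<forall>j<i. s j \<noteq> \<infinity>"
  shows "path_code (decode_path s) i = s i"
proof (cases "\<exists>i. s i = \<infinity>")
  case True
  define n where "n = (LEAST i. s i = \<infinity>)"
  have sn: "s n = \<infinity>" and below: "\<And>j. j < n \<Longrightarrow> s j \<noteq> \<infinity>"
    using True unfolding n_def by (auto intro: LeastI_ex dest: not_less_Least)
  have dec: "decode_path s = Inl (map (\<lambda>i. the_enat (s i)) [0..<n])"
    using True by (simp add: decode_path_def n_def)
  have "\<not> n < i" using assms sn by blast
  then consider "i < n" | "i = n" by linarith
  then show ?thesis
  proof cases
    case 1
    then show ?thesis using below[OF 1] by (cases "s i") (auto simp: dec path_code_def)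
  qed (simp add: dec path_code_def sn)
next
  case False
  then have "s i \<noteq> \<infinity>" by auto
  with False show ?thesis by (cases "s i") (simp_all add: decode_path_def path_code_def)
qed

lemma decode_path_mem_cylinder_iff:
  "decode_path s \<in> cylinder a F \<longleftrightarrow> (\<forall>i<length a. s i = enat (a ! i)) \<and> s (length a) \<notin> enat ` F"
proof
  assume mem: "decode_path s \<in> cylinder a F"
  have prefix: "\<forall>j<i. s j = enat (a ! j)" if "i \<le> length a" for i
    using that
  proof (induction i)
    case (Suc i)
    then have "s i = path_code (decode_path s) i"
      by (simp add: path_code_decode)
    also have "\<dots> = enat (a ! i)"
      using mem Suc.prems by (simp add: mem_cylinder_iff_path_code)
    finally show ?case
      using Suc by (auto simp: less_Suc_eq)
  qed simp
  then have "s (length a) = path_code (decode_path s) (length a)"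
    by (intro path_code_decode[symmetric]) auto
  then show "(\<forall>i<length a. s i = enat (a ! i)) \<and> s (length a) \<notin> enat ` F"
    using mem prefix[of "length a"] by (simp add: mem_cylinder_iff_path_code)
next
  assume code: "(\<forall>i<length a. s i = enat (a ! i)) \<and> s (length a) \<notin> enat ` F"
  then have "path_code (decode_path s) i = s i" if "i \<le> length a" for i
    using that by (intro path_code_decode) auto
  then show "decode_path s \<in> cylinder a F"
    using code by (simp add: mem_cylinder_iff_path_code)
qed

abbreviation code_top :: "(nat \<Rightarrow> enat) topology" where
  "code_top \<equiv> product_topology (\<lambda>_. euclidean) UNIV"

lemma topspace_code_top [simp]: "topspace code_top = UNIV"
  by (auto simp: PiE_def extensional_def)

lemma openin_code_top_coordinate:
  fixes S :: "enat set"
  shows "open S \<Longrightarrow> openin code_top {s. s i \<in> S}"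
  using openin_continuous_map_preimage[OF continuous_map_product_projection[of i UNIV "\<lambda>_. euclidean"], of S]
  by simp

lemma open_enat_image: "open (enat ` F)"
proof -
  have "enat ` F = (\<Union>k\<in>F. {enat k})" by blast
  then show ?thesis by (simp add: open_enat open_UN)
qed

lemma continuous_map_decode_path: "continuous_map code_top path_top decode_path"
  unfolding path_top_def
proof (rule continuous_on_generated_topo)
  fix U assume "U \<in> {cylinder a F | a F. finite F}"
  then obtain a F where U: "U = cylinder a F" "finite F" by blast
  define S where "S i = (if i < length a then {enat (a ! i)} else - enat ` F)" for i
  have "(\<forall>i\<le>length a. s i \<in> S i) \<longleftrightarrow> decode_path s \<in> U" for s
    by (auto simp: U decode_path_mem_cylinder_iff S_def le_less)
  then have "decode_path -` U \<inter> topspace code_top = (\<Inter>i\<in>{..length a}. {s. s i \<in> S i}) \<inter> topspace code_top"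
    by auto
  moreover have "open (S i)" for i
    using U(2) by (simp add: S_def open_enat finite_imp_closed open_Compl)
  ultimately show "openin code_top (decode_path -` U \<inter> topspace code_top)"
    using openin_INT[of "{..length a}" code_top "\<lambda>i. {s. s i \<in> S i}"]
    by (simp add: openin_code_top_coordinate)
next
  have "cylinder [] {} = UNIV" by (simp add: cylinder_Nil)
  then show "decode_path ` topspace code_top \<subseteq> \<Union>{cylinder a F | a F. finite F}"
    by blast
qed

lemma compactin_cylinder_Nil:
  assumes "finite F"
  shows "compactin path_top (cylinder [] F)"
proof -
  define S :: "nat \<Rightarrow> enat set" where "S i = (if i = 0 then - enat ` F else UNIV)" for i
  have "compact (S i)" for i
    using open_enat_image compact_UNIV by (simp add: S_def compact_eq_closed closed_def)
  then have "compactin code_top (PiE UNIV S)"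
    by (simp add: compactin_PiE)
  moreover have "cylinder [] F = decode_path ` PiE UNIV S"
  proof
    show "cylinder [] F \<subseteq> decode_path ` PiE UNIV S"
    proof
      fix x assume "x \<in> cylinder [] F"
      then have "path_code x \<in> PiE UNIV S"
        by (simp add: mem_cylinder_iff_path_code S_def PiE_iff)
      then show "x \<in> decode_path ` PiE UNIV S"
        by (metis decode_path_code image_eqI)
    qed
    show "decode_path ` PiE UNIV S \<subseteq> cylinder [] F"
    proof
      fix x assume "x \<in> decode_path ` PiE UNIV S"
      then obtain s where "x = decode_path s" "s 0 \<in> S 0"
        by (auto simp: PiE_iff)
      then show "x \<in> cylinder [] F"
        by (simp add: decode_path_mem_cylinder_iff S_def)
    qed
  qed
  ultimately show ?thesis
    using image_compactin[OF _ continuous_map_decode_path] by simp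
qed

section \<open>The groupoid \<open>H\<^sub>\<infinity>\<close>\<close>

definition harr_of :: "nat list \<Rightarrow> nat list \<Rightarrow> epath \<Rightarrow> harr" where
  "harr_of a b x = (pcat a x, int (length a) - int (length b), pcat b x)"

lemma Zset_eq_image: "Zset a b F = harr_of a b ` {x. avoids F x}"
  by (auto simp: Zset_def harr_of_def)

lemma harr_of_Nil_Nil [simp]: "harr_of [] [] x = (x, 0, x)"
  by (simp add: harr_of_def)

lemma harr_of_pcat: "harr_of a b (pcat u x) = harr_of (a @ u) (b @ u) x"
  by (simp add: harr_of_def pcat_append)

lemma harr_of_eq_harr_of_cases:
  assumes "harr_of a b x = harr_of c d w"
  shows "(\<exists>u. c = a @ u \<and> d = b @ u \<and> x = pcat u w) \<or> (\<exists>u. a = c @ u \<and> b = d @ u \<and> w = pcat u x)"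
proof -
  have eq: "pcat a x = pcat c w" "int (length a) - int (length b) = int (length c) - int (length d)"
    "pcat b x = pcat d w"
    using assms by (auto simp: harr_of_def)
  from pcat_eq_pcat_cases[OF eq(1)] show ?thesis
  proof (elim disjE exE conjE)
    fix u assume u: "c = a @ u" "x = pcat u w"
    then have "pcat (b @ u) w = pcat d w" "length (b @ u) = length d"
      using eq by (auto simp: pcat_append)
    then show ?thesis using u pcat_eq_same_length by blast
  next
    fix u assume u: "a = c @ u" "w = pcat u x"
    then have "pcat b x = pcat (d @ u) x" "length b = length (d @ u)"
      using eq by (auto simp: pcat_append)
    then show ?thesis using u pcat_eq_same_length by blast
  qed
qed

lemma openin_avoids_pcat:
  assumes "finite F"
  shows "openin path_top {y. avoids F (pcat u y)}"
proof (cases "u = []")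
  case True
  then show ?thesis using openin_cylinder[OF assms, of "[]"] by (simp add: cylinder_Nil)
next
  case False
  then show ?thesis
    using openin_topspace[of path_top] by (cases "hd u \<in> F") (simp_all add: avoids_pcat)
qed

lemma continuous_map_harr_of: "continuous_map path_top (gtop Hinf) (harr_of a b)"
  unfolding Hinf_def grpd.simps
proof (rule continuous_on_generated_topo)
  fix U assume "U \<in> {Zset c d F | c d F. finite F}"
  then obtain c d F where U: "U = Zset c d F" "finite F" by blast
  show "openin path_top (harr_of a b -` U \<inter> topspace path_top)"
  proof (subst openin_subopen, intro ballI)
    fix x assume "x \<in> harr_of a b -` U \<inter> topspace path_top"
    then obtain w where w: "avoids F w" "harr_of a b x = harr_of c d w"
      by (auto simp: U Zset_eq_image)
    from harr_of_eq_harr_of_cases[OF w(2)]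
    show "\<exists>T. openin path_top T \<and> x \<in> T \<and> T \<subseteq> harr_of a b -` U \<inter> topspace path_top"
    proof (elim disjE exE conjE)
      fix u assume "c = a @ u" "d = b @ u" "x = pcat u w"
      then show ?thesis
        using w(1) U openin_cylinder[of F u]
        by (intro exI[of _ "cylinder u F"]) (auto simp: cylinder_def Zset_eq_image harr_of_pcat)
    next
      fix u assume "a = c @ u" "b = d @ u" "w = pcat u x"
      then show ?thesis
        using w(1) U openin_avoids_pcat[of F u]
        by (intro exI[of _ "{y. avoids F (pcat u y)}"]) (auto simp: Zset_eq_image simp flip: harr_of_pcat)
    qed
  qed
next
  have "harr_of a b ` topspace path_top = Zset a b {}"
    by (simp add: Zset_eq_image)
  then show "harr_of a b ` topspace path_top \<subseteq> \<Union>{Zset c d F | c d F. finite F}"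
    by blast
qed

lemma Zset_subset_garr: "Zset a b F \<subseteq> garr Hinf"
  by (auto simp: Zset_def Hinf_def)

lemma openin_Zset: "finite F \<Longrightarrow> openin (gtop Hinf) (Zset a b F)"
  unfolding Hinf_def by simp (rule topology_generated_by_Basis, blast)

lemma compactin_Zset:
  assumes "finite F"
  shows "compactin (gtop Hinf) (Zset a b F)"
  using image_compactin[OF compactin_cylinder_Nil[OF assms] continuous_map_harr_of]
  by (simp add: Zset_eq_image cylinder_Nil)

lemma Hinf_unit_nbhd:
  assumes "openin (gtop Hinf) A" "(x, 0, x) \<in> A"
  shows "\<exists>a F. finite F \<and> x \<in> cylinder a F \<and> (\<lambda>y. (y, 0, y)) ` cylinder a F \<subseteq> A"
proof -
  have "openin path_top {y. (y, 0, y) \<in> A}"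
    using openin_continuous_map_preimage[OF continuous_map_harr_of assms(1), of "[]" "[]"] by simp
  then show ?thesis
    using path_top_cylinder_basis[of "{y. (y, 0, y) \<in> A}" x] assms(2) by blast
qed

lemma grng_Hinf_Zset: "grng Hinf ` Zset a b F = (\<lambda>y. (y, 0, y)) ` cylinder a F"
  by (force simp: Zset_eq_image cylinder_def harr_of_def Hinf_def)

lemma gsrc_Hinf_Zset: "gsrc Hinf ` Zset a b F = (\<lambda>y. (y, 0, y)) ` cylinder b F"
  by (force simp: Zset_eq_image cylinder_def harr_of_def Hinf_def)

lemma hc_Zset: "h \<in> Zset a b F \<Longrightarrow> hc h = int (length a) - int (length b)"
  by (auto simp: Zset_def hc_def)

lemma inj_on_grng_Hinf_Zset: "inj_on (grng Hinf) (Zset a b F)"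
  by (auto simp: inj_on_def Zset_eq_image harr_of_def Hinf_def)

lemma inj_on_gsrc_Hinf_Zset: "inj_on (gsrc Hinf) (Zset a b F)"
  by (auto simp: inj_on_def Zset_eq_image harr_of_def Hinf_def)

section \<open>The groupoid \<open>G\<^sup>\<infinity>\<^sub>\<alpha>\<close>\<close>

lemma units_Ginf: "units (Ginf G \<alpha>) = (\<lambda>y. (y, 0, y)) ` UNIV \<times> units G"
proof -
  have "(y, 0, y) \<in> garr Hinf" for y
    using Zset_subset_garr[of "[]" "[]" "{}"] by (force simp: Zset_def)
  then show ?thesis
    by (force simp: units_def Ginf_def Hinf_def)
qed

lemma grng_Ginf_Zset_Times:
  assumes "V \<subseteq> units G"
  shows "grng (Ginf G \<alpha>) ` (Zset a b F \<times> V) = (\<lambda>y. (y, 0, y)) ` cylinder a F \<times> V"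
proof -
  have "grng (Ginf G \<alpha>) = map_prod (grng Hinf) (grng G)"
    by (auto simp: Ginf_def fun_eq_iff)
  moreover have "grng G ` V = V"
    using assms by (force simp: units_def)
  ultimately show ?thesis
    by (simp add: map_prod_surj_on grng_Hinf_Zset)
qed

lemma gsrc_Ginf_on_Zset_Times:
  assumes "groupoid G" "V \<subseteq> units G" "q \<in> Zset a b F \<times> V"
  shows "gsrc (Ginf G \<alpha>) q = map_prod (gsrc Hinf) (autpow G \<alpha> (int (length a) - int (length b))) q"
  using assms by (auto simp: Ginf_def hc_Zset units_gsrc)

lemma gsrc_Ginf_Zset_Times:
  assumes "groupoid G" "V \<subseteq> units G"
  shows "gsrc (Ginf G \<alpha>) ` (Zset a b F \<times> V) =
    (\<lambda>y. (y, 0, y)) ` cylinder b F \<times> autpow G \<alpha> (int (length a) - int (length b)) ` V"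
  using gsrc_Ginf_on_Zset_Times[OF assms]
  by (simp add: map_prod_surj_on gsrc_Hinf_Zset cong: image_cong)

lemma compact_open_bisection_Zset_Times:
  assumes "groupoid G" "finite F" "V \<subseteq> units G" "openin (gtop G) V" "compactin (gtop G) V"
    and "inj_on (autpow G \<alpha> (int (length a) - int (length b))) V"
  shows "compact_open_bisection (Ginf G \<alpha>) (Zset a b F \<times> V)"
  unfolding compact_open_bisection_def bisection_def
proof (intro conjI)
  show "Zset a b F \<times> V \<subseteq> garr (Ginf G \<alpha>)"
    using Zset_subset_garr assms(3) by (auto simp: Ginf_def units_def)
  have "grng (Ginf G \<alpha>) = map_prod (grng Hinf) (grng G)"
    by (auto simp: Ginf_def fun_eq_iff)
  moreover have "inj_on (grng G) V"
  proof (rule inj_onI)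
    fix g g' assume "g \<in> V" "g' \<in> V" "grng G g = grng G g'"
    moreover have "grng G g = g" "grng G g' = g'"
      using calculation(1,2) assms(3) by (auto simp: units_def)
    ultimately show "g = g'" by simp
  qed
  ultimately show "inj_on (grng (Ginf G \<alpha>)) (Zset a b F \<times> V)"
    by (simp add: map_prod_inj_on inj_on_grng_Hinf_Zset)
  show "inj_on (gsrc (Ginf G \<alpha>)) (Zset a b F \<times> V)"
  proof (rule inj_onI)
    fix q q' assume q: "q \<in> Zset a b F \<times> V" "q' \<in> Zset a b F \<times> V"
      and "gsrc (Ginf G \<alpha>) q = gsrc (Ginf G \<alpha>) q'"
    then have "map_prod (gsrc Hinf) (autpow G \<alpha> (int (length a) - int (length b))) q =
               map_prod (gsrc Hinf) (autpow G \<alpha> (int (length a) - int (length b))) q'"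
      by (simp add: gsrc_Ginf_on_Zset_Times[OF assms(1,3)])
    then show "q = q'"
      by (rule inj_onD[OF map_prod_inj_on[OF inj_on_gsrc_Hinf_Zset assms(6)] _ q])
  qed
  show "openin (gtop (Ginf G \<alpha>)) (Zset a b F \<times> V)"
    using openin_Zset[OF assms(2)] assms(4) by (simp add: Ginf_def openin_prod_Times_iff)
  show "compactin (gtop (Ginf G \<alpha>)) (Zset a b F \<times> V)"
    using compactin_Zset[OF assms(2)] assms(5) by (simp add: Ginf_def compactin_Times)
qed

lemma Ginf_units_nbhd:
  assumes "openin (subtopology (gtop (Ginf G \<alpha>)) (units (Ginf G \<alpha>))) W" "W \<noteq> {}"
    and "\<forall>U x. openin (subtopology (gtop G) (units G)) U \<and> x \<in> U \<longrightarrow> (\<exists>V\<in>\<B>. x \<in> V \<and> V \<subseteq> U)"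
  shows "\<exists>a F V. finite F \<and> V \<in> \<B> \<and> V \<noteq> {} \<and> (\<lambda>y. (y, 0, y)) ` cylinder a F \<times> V \<subseteq> W"
proof -
  have "W \<subseteq> (\<lambda>y. (y, 0, y)) ` UNIV \<times> units G"
    using openin_subset[OF assms(1)] by (auto simp: units_Ginf)
  moreover obtain p where "p \<in> W"
    using assms(2) by blast
  ultimately obtain x g where xg: "((x, 0, x), g) \<in> W" "g \<in> units G"
    by (cases p) auto
  obtain U where U: "openin (prod_topology (gtop Hinf) (gtop G)) U" "W = U \<inter> units (Ginf G \<alpha>)"
    using assms(1) by (auto simp: openin_subtopology Ginf_def)
  then obtain A C where AC: "openin (gtop Hinf) A" "openin (gtop G) C" "(x, 0, x) \<in> A" "g \<in> C"
    "A \<times> C \<subseteq> U"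
    using xg(1) openin_prod_topology_alt by (metis IntE)
  obtain a F where aF: "finite F" "(\<lambda>y. (y, 0, y)) ` cylinder a F \<subseteq> A"
    using Hinf_unit_nbhd[OF AC(1,3)] by blast
  have "openin (subtopology (gtop G) (units G)) (units G \<inter> C)"
    using AC(2) by (rule openin_subtopology_Int2)
  then obtain V where V: "V \<in> \<B>" "g \<in> V" "V \<subseteq> units G \<inter> C"
    using assms(3) xg(2) AC(4) by blast
  have "(\<lambda>y. (y, 0, y)) ` cylinder a F \<times> V \<subseteq> A \<times> C"
    using aF(2) V(3) by blast
  moreover have "(\<lambda>y. (y, 0, y)) ` cylinder a F \<times> V \<subseteq> units (Ginf G \<alpha>)"
    using V(3) by (auto simp: units_Ginf)
  ultimately have "(\<lambda>y. (y, 0, y)) ` cylinder a F \<times> V \<subseteq> W"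
    using AC(5) U(2) by blast
  then show ?thesis
    using aF(1) V(1,2) by blast
qed

lemma Ginf_contracting_bisection:
  fixes l :: nat
  assumes "topological_groupoid G" "automorphism G \<alpha>" "finite F"
    and V: "V \<subseteq> units G" "openin (gtop G) V" "compactin (gtop G) V" "V \<noteq> {}"
    and "l \<ge> 1" and contract: "{y \<in> garr G. (\<alpha> ^^ l) y \<in> V} \<subseteq> V"
  shows "\<exists>B. compact_open_bisection (Ginf G \<alpha>) B \<and> grng (Ginf G \<alpha>) ` B \<subset> gsrc (Ginf G \<alpha>) ` B \<and>
    gsrc (Ginf G \<alpha>) ` B = (\<lambda>y. (y, 0, y)) ` cylinder a F \<times> V"
proof -
  let ?L = "Ginf G \<alpha>" and ?diag = "\<lambda>y. (y, 0, y)"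
  define V' where "V' = {y \<in> garr G. (\<alpha> ^^ l) y \<in> V}"
  note V' = automorphism_funpow_preimage[OF assms(1,2) V(2,3), of l, folded V'_def]
  obtain e where "e \<notin> F"
    using assms(3) ex_new_if_finite infinite_UNIV_nat by blast
  define u where "u = replicate l e"
  have u: "u \<noteq> []" "hd u \<notin> F" "int (length (a @ u)) - int (length a) = int l"
    using \<open>l \<ge> 1\<close> \<open>e \<notin> F\<close> by (auto simp: u_def)
  define B where "B = Zset (a @ u) a F \<times> V'"
  have "V' \<subseteq> V"
    using contract by (simp add: V'_def)
  have "groupoid G"
    using assms(1) by (simp add: topological_groupoid_def)
  have units_V': "V' \<subseteq> units G"
    using \<open>V' \<subseteq> V\<close> V(1) by blast
  have autpow: "autpow G \<alpha> (int (length (a @ u)) - int (length a)) = \<alpha> ^^ l"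
    using u(3) by (simp add: autpow_def)
  have "compact_open_bisection ?L B"
    unfolding B_def
    using \<open>groupoid G\<close> assms(3) units_V' V'(2,3) V'(4)[folded autpow]
    by (rule compact_open_bisection_Zset_Times)
  moreover have "grng ?L ` B = ?diag ` cylinder (a @ u) F \<times> V'"
    unfolding B_def using units_V' by (rule grng_Ginf_Zset_Times)
  moreover have "gsrc ?L ` B = ?diag ` cylinder a F \<times> V"
    unfolding B_def gsrc_Ginf_Zset_Times[OF \<open>groupoid G\<close> units_V'] autpow V'(1) ..
  moreover have "?diag ` cylinder (a @ u) F \<times> V' \<subset> ?diag ` cylinder a F \<times> V"
  proof -
    have "?diag ` cylinder (a @ u) F \<subset> ?diag ` cylinder a F"
      by (rule image_strict_mono[OF _ cylinder_append_psubset[OF u(1,2)]]) (simp add: inj_on_def)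
    moreover have "V' \<noteq> {}"
      using V'(1) V(4) by blast
    ultimately show ?thesis
      using \<open>V' \<subseteq> V\<close> by (rule Times_psubset_Times)
  qed
  ultimately show ?thesis
    by (intro exI[of _ B] conjI) simp_all
qed

theorem lemma5p4:
  fixes G :: "'a grpd" and \<alpha> :: "'a \<Rightarrow> 'a" and \<B> :: "'a set set"
  assumes "topological_groupoid G"
    and "locally_compact_space (gtop G)"
    and "Hausdorff_space (gtop G)"
    and "etale G"
    and "automorphism G \<alpha>"
    and "ample G"
    and "\<forall>V\<in>\<B>. V \<subseteq> units G \<and> compact_open_bisection G V"
    and "\<forall>U x. openin (subtopology (gtop G) (units G)) U \<and> x \<in> U \<longrightarrow> (\<exists>V\<in>\<B>. x \<in> V \<and> V \<subseteq> U)"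
    and "\<forall>V\<in>\<B>. \<exists>l::nat. l \<ge> 1 \<and> {x \<in> garr G. (\<alpha> ^^ l) x \<in> V} \<subseteq> V"
  shows "locally_contracting (Ginf G \<alpha>)"
  unfolding locally_contracting_def
proof (intro allI impI)
  let ?L = "Ginf G \<alpha>"
  fix W assume W: "openin (subtopology (gtop ?L) (units ?L)) W \<and> W \<noteq> {}"
  then obtain a F V where aFV: "finite F" "V \<in> \<B>" "V \<noteq> {}"
    and sub: "(\<lambda>y. (y, 0, y)) ` cylinder a F \<times> V \<subseteq> W"
    using Ginf_units_nbhd[OF W[THEN conjunct1] W[THEN conjunct2] assms(8)] by blast
  obtain l where l: "l \<ge> 1" "{y \<in> garr G. (\<alpha> ^^ l) y \<in> V} \<subseteq> V"
    using assms(9) aFV(2) by blast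
  have V: "V \<subseteq> units G" "openin (gtop G) V" "compactin (gtop G) V"
    using assms(7) aFV(2) by (auto simp: compact_open_bisection_def)
  obtain B where "compact_open_bisection ?L B" "grng ?L ` B \<subset> gsrc ?L ` B"
    and "gsrc ?L ` B = (\<lambda>y. (y, 0, y)) ` cylinder a F \<times> V"
    using Ginf_contracting_bisection[OF assms(1,5) aFV(1) V aFV(3) l, where a = a] by blast
  with sub show "\<exists>B. compact_open_bisection ?L B \<and> grng ?L ` B \<subset> gsrc ?L ` B \<and> gsrc ?L ` B \<subseteq> W"
    by (intro exI[of _ B] conjI) simp_all
qed

end
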